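(* Fix $k\in\mathcal{K}$ and an SU index $k'$. Consider problem (T1): maximize over $p_{k,k'}\ge0$, $b_{k,k'}\ge0$, $q_k\ge0$, $w_k\ge0$ $$EE_k=\frac{b_{k,k'}\log_2\!\Big(1+\frac{p_{k,k'}g_{k,k'}}{b_{k,k'}N_0}\Big)}{\frac{p_{k,k'}}{\xi}+\frac{q_k}{\xi}}$$ subject to $b_{k,k'}+w_k\le W^k_{MC}$ and $w_k\log_2\!\big(1+\frac{q_kh_k}{w_kN_0}\big)\ge R^k_{MC}$. Then (T1) is equivalent (same optimal value, with optimal $(p_{k,k'},w_k)$ corresponding) to the problem (T2): maximize over $p_{k,k'}\ge0$, $w_k\ge0$ $$EE_k=\frac{(W^k_{MC}-w_k)\log_2\!\Big(1+\frac{p_{k,k'}g_{k,k'}}{(W^k_{MC}-w_k)N_0}\Big)}{\frac{p_{k,k'}}{\xi}+\big(2^{R^k_{MC}/w_k}-1\big)\frac{w_kN_0}{h_k\xi}},$$ and the objective $EE_k$ of (T2) is strictly and jointly quasi-concave in $(p_{k,k'},w_k)$; hence (T2) is a quasi-concave maximization problem.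
   Context: Constants: $N_0>0$ noise spectral density, $\xi\in(0,1]$ power amplifier efficiency; for the macro user $k$: licensed bandwidth $W^k_{MC}>0$, minimum rate requirement $R^k_{MC}>0$, channel gain $h_k>0$ from the small-cell base station to MU $k$, and $g_{k,k'}>0$ the channel gain to small-cell user $k'$ on MU $k$'s bandwidth. The quantity $EE_k$ is the "trading energy efficiency" of MU $k$: rate gained by the small cell using part $b_{k,k'}$ of MU $k$'s band for SU $k'$, divided by the power spent on SU $k'$ and on serving MU $k$ with bandwidth $w_k$ and power $q_k$. Expressions are considered where defined, i.e. $0<w_k$ and $w_k\le W^k_{MC}$ (with $b\log_2(1+x/b)$ taken as $0$ at $b=0$). *)

theory Defs
  imports "HOL-Analysis.Analysis"
begin

text \<open>Shannon-type rate  b log2(1 + x/b), with the convention that it is 0 at b = 0.\<close>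
definition rate :: "real \<Rightarrow> real \<Rightarrow> real" where
  "rate b x = (if b = 0 then 0 else b * log 2 (1 + x / b))"

definition EE1 :: "real \<Rightarrow> real \<Rightarrow> real \<Rightarrow> real \<Rightarrow> real \<Rightarrow> real \<Rightarrow> real \<times> real \<times> real \<times> real \<Rightarrow> real" where
  "EE1 N0 \<xi> h g W R = (\<lambda>(p, b, q, w). rate b (p * g / N0) / (p / \<xi> + q / \<xi>))"

definition F1 :: "real \<Rightarrow> real \<Rightarrow> real \<Rightarrow> real \<Rightarrow> real \<Rightarrow> real \<Rightarrow> (real \<times> real \<times> real \<times> real) set" where
  "F1 N0 \<xi> h g W R = {(p, b, q, w). 0 \<le> p \<and> 0 \<le> b \<and> 0 \<le> q \<and> 0 < w \<and> w \<le> W \<and>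
       b + w \<le> W \<and> w * log 2 (1 + q * h / (w * N0)) \<ge> R}"

text \<open>Minimal MU power for a given bandwidth w (rate constraint with equality).\<close>
definition qmin :: "real \<Rightarrow> real \<Rightarrow> real \<Rightarrow> real \<Rightarrow> real" where
  "qmin N0 h R w = (2 powr (R / w) - 1) * w * N0 / h"

definition EE2 :: "real \<Rightarrow> real \<Rightarrow> real \<Rightarrow> real \<Rightarrow> real \<Rightarrow> real \<Rightarrow> real \<times> real \<Rightarrow> real" where
  "EE2 N0 \<xi> h g W R = (\<lambda>(p, w). rate (W - w) (p * g / N0) /
       (p / \<xi> + (2 powr (R / w) - 1) * (w * N0 / (h * \<xi>))))"

definition F2 :: "real \<Rightarrow> (real \<times> real) set" where
  "F2 W = {(p, w). 0 \<le> p \<and> 0 < w \<and> w \<le> W}"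

definition quasiconcave_on :: "('a::real_vector) set \<Rightarrow> ('a \<Rightarrow> real) \<Rightarrow> bool" where
  "quasiconcave_on S f \<longleftrightarrow> convex S \<and>
     (\<forall>x\<in>S. \<forall>y\<in>S. \<forall>t::real. 0 \<le> t \<and> t \<le> 1 \<longrightarrow>
        f (t *\<^sub>R x + (1 - t) *\<^sub>R y) \<ge> min (f x) (f y))"

definition strictly_quasiconcave_on :: "('a::real_vector) set \<Rightarrow> ('a \<Rightarrow> real) \<Rightarrow> bool" where
  "strictly_quasiconcave_on S f \<longleftrightarrow> convex S \<and>
     (\<forall>x\<in>S. \<forall>y\<in>S. \<forall>t::real. x \<noteq> y \<and> 0 < t \<and> t < 1 \<longrightarrow>
        f (t *\<^sub>R x + (1 - t) *\<^sub>R y) > min (f x) (f y))"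

end

theory Submission
  imports Defs
begin

text \<open>
  For fixed \<open>(p, w)\<close> the objective of (T1) increases with the SU bandwidth \<open>b\<close> and decreases
  with the MU power \<open>q\<close>, so an optimum gives the whole remaining band \<open>b = W - w\<close> to the SU
  and serves the MU with the least power meeting its rate constraint, \<open>q = qmin w\<close>; this
  reduces (T1) to (T2). The objective of (T2) is the ratio of the SU rate, jointly concave
  as the perspective \<open>s log2 (1 + a / s)\<close> of a concave function, and the consumed power,
  convex because \<open>w 2 powr (R / w)\<close> is the perspective of an exponential. A nonnegative
  concave function over a positive convex one has convex superlevel sets. Strictness comes from
  strict concavity of the rate in \<open>p\<close> when \<open>w\<close> is fixed and strict convexity of the power in
  \<open>w\<close> otherwise.
\<close>

definition strictly_concave_on :: "'a::real_vector set \<Rightarrow> ('a \<Rightarrow> real) \<Rightarrow> bool" where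
  "strictly_concave_on S f \<longleftrightarrow> convex S \<and>
     (\<forall>x\<in>S. \<forall>y\<in>S. \<forall>t::real. x \<noteq> y \<and> 0 < t \<and> t < 1 \<longrightarrow>
        t * f x + (1 - t) * f y < f (t *\<^sub>R x + (1 - t) *\<^sub>R y))"

lemma strictly_concave_onD:
  "strictly_concave_on S f \<Longrightarrow> x \<in> S \<Longrightarrow> y \<in> S \<Longrightarrow> x \<noteq> y \<Longrightarrow> 0 < t \<Longrightarrow> t < 1 \<Longrightarrow>
    t * f x + (1 - t) * f y < f (t *\<^sub>R x + (1 - t) *\<^sub>R y)"
  by (simp add: strictly_concave_on_def)

lemma concave_on_of_tangents:
  fixes f f' :: "real \<Rightarrow> real"
  assumes "convex I" and tangent: "\<And>y m. y \<in> I \<Longrightarrow> m \<in> I \<Longrightarrow> f y \<le> f m + f' m * (y - m)"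
  shows "concave_on I f"
  unfolding concave_on_iff
proof (intro conjI ballI allI impI)
  fix x y u v :: real
  assume xy: "x \<in> I" "y \<in> I" and uv: "0 \<le> u" "0 \<le> v" "u + v = 1"
  define m where "m = u * x + v * y"
  have m: "m \<in> I" using convexD[OF assms(1) xy uv] by (simp add: m_def)
  have "u * f x + v * f y \<le> u * (f m + f' m * (x - m)) + v * (f m + f' m * (y - m))"
    using tangent[OF _ m] xy uv by (intro add_mono mult_left_mono) auto
  also have "\<dots> = (u + v) * f m + f' m * (u * x + v * y - (u + v) * m)"
    by (simp add: algebra_simps)
  also have "\<dots> = f m" using uv by (simp add: m_def)
  finally show "u * f x + v * f y \<le> f (u *\<^sub>R x + v *\<^sub>R y)" by (simp add: m_def)
qed (fact assms)

lemma strictly_concave_on_of_strict_tangents: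
  fixes f f' :: "real \<Rightarrow> real"
  assumes "convex I"
    and tangent: "\<And>y m. y \<in> I \<Longrightarrow> m \<in> I \<Longrightarrow> y \<noteq> m \<Longrightarrow> f y < f m + f' m * (y - m)"
  shows "strictly_concave_on I f"
  unfolding strictly_concave_on_def
proof (intro conjI ballI allI impI)
  fix x y t :: real
  assume xy: "x \<in> I" "y \<in> I" and t: "x \<noteq> y \<and> 0 < t \<and> t < 1"
  define m where "m = t * x + (1 - t) * y"
  have m: "m \<in> I" using convexD[OF assms(1) xy, of t "1 - t"] t by (simp add: m_def)
  have "x - m = (1 - t) * (x - y)" "y - m = t * (y - x)" by (simp_all add: m_def algebra_simps)
  then have "x \<noteq> m" "y \<noteq> m" using t by auto
  then have "t * f x + (1 - t) * f y < t * (f m + f' m * (x - m)) + (1 - t) * (f m + f' m * (y - m))"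
    using tangent[OF _ m] xy t by (intro add_strict_mono mult_strict_left_mono) auto
  also have "\<dots> = f m" by (simp add: m_def algebra_simps)
  finally show "t * f x + (1 - t) * f y < f (t *\<^sub>R x + (1 - t) *\<^sub>R y)" by (simp add: m_def)
qed (fact assms)

lemma concave_on_log_one_plus:
  assumes "1 < b" shows "concave_on {0..} (\<lambda>u. log b (1 + u))"
proof (rule concave_on_of_tangents[where f' = "\<lambda>m. 1 / ((1 + m) * ln b)"])
  fix y m :: real assume "y \<in> {0..}" "m \<in> {0..}"
  then have "ln (1 + y) - ln (1 + m) \<le> (y - m) / (1 + m)" using ln_diff_le[of "1 + y" "1 + m"] by simp
  then have "(ln (1 + y) - ln (1 + m)) / ln b \<le> (y - m) / (1 + m) / ln b"
    using assms by (intro divide_right_mono) auto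
  then show "log b (1 + y) \<le> log b (1 + m) + 1 / ((1 + m) * ln b) * (y - m)"
    by (simp add: log_def diff_divide_distrib)
qed simp

lemma strictly_concave_on_log_one_plus:
  assumes "1 < b" shows "strictly_concave_on {0..} (\<lambda>u. log b (1 + u))"
proof (rule strictly_concave_on_of_strict_tangents[where f' = "\<lambda>m. 1 / ((1 + m) * ln b)"])
  fix y m :: real assume "y \<in> {0..}" "m \<in> {0..}" "y \<noteq> m"
  then have "ln (1 + y) - ln (1 + m) < (y - m) / (1 + m)" using ln_diff_less[of "1 + y" "1 + m"] by simp
  then have "(ln (1 + y) - ln (1 + m)) / ln b < (y - m) / (1 + m) / ln b"
    using assms by (intro divide_strict_right_mono) auto
  then show "log b (1 + y) < log b (1 + m) + 1 / ((1 + m) * ln b) * (y - m)"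
    by (simp add: log_def diff_divide_distrib)
qed simp

(* The tangent inequality of exp is that of ln at the points exp (c * y) and exp (c * m). *)
lemma concave_on_minus_exp_scaled: "concave_on UNIV (\<lambda>u. - exp (c * u))"
proof (rule concave_on_of_tangents[where f' = "\<lambda>m. - c * exp (c * m)"])
  fix y m :: real
  show "- exp (c * y) \<le> - exp (c * m) + - c * exp (c * m) * (y - m)"
    using ln_diff_le[of "exp (c * y)" "exp (c * m)"] by (simp add: field_simps)
qed simp

lemma strictly_concave_on_minus_exp_scaled:
  assumes "c \<noteq> 0" shows "strictly_concave_on UNIV (\<lambda>u. - exp (c * u))"
proof (rule strictly_concave_on_of_strict_tangents[where f' = "\<lambda>m. - c * exp (c * m)"])
  fix y m :: real assume "y \<noteq> m"
  then have "c * y \<noteq> c * m" using assms by simp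
  then show "- exp (c * y) < - exp (c * m) + - c * exp (c * m) * (y - m)"
    using ln_diff_less[of "exp (c * y)" "exp (c * m)"] by (simp add: field_simps)
qed simp

(* Convex combinations of perspectives s * f (a / s) are perspectives of a \<mu>-weighted convex
   combination; this carries (strict) concavity of f over to its perspective. *)
lemma perspective_combination:
  fixes f :: "real \<Rightarrow> real"
  assumes "0 < s1" "0 < s2" "0 \<le> t" "t \<le> 1"
  defines "s \<equiv> t * s1 + (1 - t) * s2"
  defines "\<mu> \<equiv> t * s1 / s"
  shows "0 < s" and "0 \<le> \<mu>" and "\<mu> \<le> 1" and "0 < t \<Longrightarrow> t < 1 \<Longrightarrow> 0 < \<mu> \<and> \<mu> < 1"
    and "(t * a1 + (1 - t) * a2) / s = \<mu> * (a1 / s1) + (1 - \<mu>) * (a2 / s2)"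
    and "t * (s1 * f (a1 / s1)) + (1 - t) * (s2 * f (a2 / s2))
       = s * (\<mu> * f (a1 / s1) + (1 - \<mu>) * f (a2 / s2))"
proof -
  have "0 \<le> t * s1" "0 \<le> (1 - t) * s2" using assms by simp_all
  moreover have "0 < t * s1 \<or> 0 < (1 - t) * s2" using assms by (cases "t = 0") auto
  ultimately show s: "0 < s" by (auto simp: s_def)
  have one_minus: "1 - \<mu> = (1 - t) * s2 / s" using s by (simp add: \<mu>_def s_def field_simps)
  show "0 \<le> \<mu>" using s assms by (simp add: \<mu>_def)
  show "\<mu> \<le> 1" using s assms one_minus by simp
  show "0 < t \<Longrightarrow> t < 1 \<Longrightarrow> 0 < \<mu> \<and> \<mu> < 1" using s assms one_minus by (simp add: \<mu>_def)
  show "(t * a1 + (1 - t) * a2) / s = \<mu> * (a1 / s1) + (1 - \<mu>) * (a2 / s2)"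
  proof -
    have "\<mu> * (a1 / s1) = t * a1 / s" "(1 - \<mu>) * (a2 / s2) = (1 - t) * a2 / s"
      using assms(1,2) unfolding one_minus by (simp_all add: \<mu>_def)
    then show ?thesis by (simp add: add_divide_distrib)
  qed
  show "t * (s1 * f (a1 / s1)) + (1 - t) * (s2 * f (a2 / s2))
      = s * (\<mu> * f (a1 / s1) + (1 - \<mu>) * f (a2 / s2))"
    using s unfolding one_minus by (simp add: \<mu>_def field_simps)
qed

lemma rate_pos_eq: "0 < b \<Longrightarrow> rate b x = b * log 2 (1 + x / b)"
  by (simp add: rate_def)

lemma rate_nonneg:
  assumes "0 \<le> b" "0 \<le> x" shows "0 \<le> rate b x"
proof -
  have "0 \<le> x / b" using assms by simp
  then have "0 \<le> log 2 (1 + x / b)" by (subst zero_le_log_cancel_iff) auto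
  then show ?thesis using assms by (simp add: rate_def)
qed

lemma rate_pos:
  assumes "0 < b" "0 < x" shows "0 < rate b x"
proof -
  have "0 < x / b" using assms by simp
  then have "0 < log 2 (1 + x / b)" by (subst zero_less_log_cancel_iff) auto
  then show ?thesis using assms by (simp add: rate_def)
qed

lemma rate_le: "0 \<le> b \<Longrightarrow> 0 \<le> x \<Longrightarrow> rate b x \<le> x / ln 2"
  using ln_add_one_self_le_self[of "x / b"]
  by (auto simp: rate_def log_def divide_right_mono mult_le_cancel_left_pos field_simps)

lemma rate_mono:
  assumes "0 \<le> b" "0 \<le> x" "x \<le> x'" shows "rate b x \<le> rate b x'"
proof (cases "b = 0")
  case False
  then have "x / b \<le> x' / b" "0 \<le> x / b" using assms by (simp_all add: divide_right_mono)
  then have "log 2 (1 + x / b) \<le> log 2 (1 + x' / b)" by simp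
  then show ?thesis using assms False by (simp add: rate_def)
qed (simp add: rate_def)

lemma rate_scale: "0 < t \<Longrightarrow> rate (t * b) (t * x) = t * rate b x"
  by (simp add: rate_def)

lemma rate_mono_bandwidth:
  assumes "0 \<le> b" "b \<le> b'" "0 \<le> x" shows "rate b x \<le> rate b' x"
proof (cases "b = 0")
  case True
  then show ?thesis using rate_nonneg[of b' x] assms by (simp add: rate_def)
next
  case False
  then have b: "0 < b" "0 < b'" using assms by auto
  define u v where "u = 1 + x / b" and "v = 1 + x / b'"
  have uv: "0 < u" "0 < v" using assms b by (simp_all add: u_def v_def add_pos_nonneg)
  have diff: "b * (u - v) = (b' - b) * (x / b')" using b by (simp add: u_def v_def field_simps)
  have "b * ln u \<le> b * (ln v + (u - v) / v)"
    using ln_diff_le[OF uv] b by (intro mult_left_mono) auto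
  also have "\<dots> = b * ln v + (b' - b) * (x / b' / v)" by (simp add: distrib_left diff)
  also have "\<dots> \<le> b * ln v + (b' - b) * ln v"
    using ln_add1_ge[of "x / b'"] assms b by (intro add_left_mono mult_left_mono) (simp_all add: v_def add.commute)
  finally have "b * ln u \<le> b' * ln v" by (simp add: algebra_simps)
  then show ?thesis using b by (simp add: rate_def log_def u_def v_def divide_right_mono)
qed

(* At b = 0 the perspective argument is unavailable; homogeneity and monotonicity in x replace it. *)
lemma rate_le_boundary:
  assumes "0 \<le> u" "0 \<le> b" "0 \<le> x" "0 \<le> y" shows "u * rate b x \<le> rate (u * b) (u * x + y)"
proof (cases "u = 0")
  case False
  then have "u * rate b x = rate (u * b) (u * x)" using assms by (simp add: rate_scale)
  also have "\<dots> \<le> rate (u * b) (u * x + y)" using assms by (intro rate_mono) auto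
  finally show ?thesis .
qed (simp add: rate_def)

lemma concave_on_rate: "concave_on ({0..} \<times> {0..}) (\<lambda>(b, x). rate b x)"
  unfolding concave_on_iff
proof (intro conjI ballI allI impI)
  show "convex ({0::real..} \<times> {0::real..})" by (simp add: convex_Times)
  fix z1 z2 :: "real \<times> real" and u v :: real
  assume "z1 \<in> {0..} \<times> {0..}" "z2 \<in> {0..} \<times> {0..}" and uv: "0 \<le> u" "0 \<le> v" "u + v = 1"
  then obtain b1 x1 b2 x2 where z: "z1 = (b1, x1)" "z2 = (b2, x2)"
    and nonneg: "0 \<le> b1" "0 \<le> x1" "0 \<le> b2" "0 \<le> x2" by auto
  have "u * rate b1 x1 + v * rate b2 x2 \<le> rate (u * b1 + v * b2) (u * x1 + v * x2)"
  proof (cases "b1 = 0 \<or> b2 = 0")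
    case True
    then show ?thesis
      using rate_le_boundary[of u b1 x1 "v * x2"] rate_le_boundary[of v b2 x2 "u * x1"] nonneg uv
      by (auto simp: rate_def add.commute)
  next
    case False
    then have b: "0 < b1" "0 < b2" using nonneg by auto
    have v: "v = 1 - u" and u: "0 \<le> u" "u \<le> 1" using uv by simp_all
    let ?L = "\<lambda>r. log 2 (1 + r)"
    define s \<mu> where "s = u * b1 + (1 - u) * b2" and "\<mu> = u * b1 / s"
    note persp = perspective_combination[OF b u, folded s_def, folded \<mu>_def]
    have "u * rate b1 x1 + v * rate b2 x2 = s * (\<mu> * ?L (x1 / b1) + (1 - \<mu>) * ?L (x2 / b2))"
      using persp(6)[of ?L x1 x2] b by (simp add: rate_pos_eq v)
    also have "\<dots> \<le> s * ?L (\<mu> * (x1 / b1) + (1 - \<mu>) * (x2 / b2))"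
      using concave_onD[OF concave_on_log_one_plus[of 2], of "1 - \<mu>" "x1 / b1" "x2 / b2"] persp(1-3) nonneg b
      by (intro mult_left_mono) auto
    also have "\<dots> = rate (u * b1 + v * b2) (u * x1 + v * x2)"
      using persp(1) persp(5)[of x1 x2] by (simp add: rate_pos_eq s_def v)
    finally show ?thesis .
  qed
  then show "u * (case z1 of (b, x) \<Rightarrow> rate b x) + v * (case z2 of (b, x) \<Rightarrow> rate b x)
      \<le> (case u *\<^sub>R z1 + v *\<^sub>R z2 of (b, x) \<Rightarrow> rate b x)" by (simp add: z)
qed

lemma strictly_concave_on_rate:
  assumes "0 < b" shows "strictly_concave_on {0..} (rate b)"
  unfolding strictly_concave_on_def
proof (intro conjI ballI allI impI)
  fix x y t :: real
  assume "x \<in> {0..}" "y \<in> {0..}" and xyt: "x \<noteq> y \<and> 0 < t \<and> t < 1"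
  let ?L = "\<lambda>r. log 2 (1 + r)"
  have "t * ?L (x / b) + (1 - t) * ?L (y / b) < ?L (t * (x / b) + (1 - t) * (y / b))"
    using strictly_concave_onD[OF strictly_concave_on_log_one_plus[of 2], of "x / b" "y / b" t]
      \<open>x \<in> {0..}\<close> \<open>y \<in> {0..}\<close> xyt assms by simp
  then have "b * (t * ?L (x / b) + (1 - t) * ?L (y / b)) < b * ?L ((t * x + (1 - t) * y) / b)"
    using assms by (simp add: add_divide_distrib)
  then show "t * rate b x + (1 - t) * rate b y < rate b (t *\<^sub>R x + (1 - t) *\<^sub>R y)"
    using assms by (simp add: rate_pos_eq algebra_simps)
qed simp

lemma concave_on_minus_mul_exp_inverse: "concave_on {0<..} (\<lambda>w. - (w * exp (c / w)))"
  unfolding concave_on_iff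
proof (intro conjI ballI allI impI)
  fix w1 w2 u v :: real
  assume w: "w1 \<in> {0<..}" "w2 \<in> {0<..}" and uv: "0 \<le> u" "0 \<le> v" "u + v = 1"
  then have v: "v = 1 - u" and u: "0 \<le> u" "u \<le> 1" and w: "0 < w1" "0 < w2" by auto
  let ?E = "\<lambda>r. - exp (c * r)"
  define s \<mu> where "s = u * w1 + (1 - u) * w2" and "\<mu> = u * w1 / s"
  note persp = perspective_combination[OF w u, folded s_def, folded \<mu>_def]
  have "u * - (w1 * exp (c / w1)) + v * - (w2 * exp (c / w2))
      = s * (\<mu> * ?E (1 / w1) + (1 - \<mu>) * ?E (1 / w2))"
    using persp(6)[of ?E 1 1] by (simp add: v)
  also have "\<dots> \<le> s * ?E (\<mu> * (1 / w1) + (1 - \<mu>) * (1 / w2))"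
    using concave_onD[OF concave_on_minus_exp_scaled, of "1 - \<mu>" "1 / w1" "1 / w2"]
      persp(1-3) by (intro mult_left_mono) auto
  also have "\<dots> = - (s * exp (c / s))"
    using persp(5)[of 1 1, symmetric] by simp
  finally show "u * - (w1 * exp (c / w1)) + v * - (w2 * exp (c / w2))
      \<le> - ((u *\<^sub>R w1 + v *\<^sub>R w2) * exp (c / (u *\<^sub>R w1 + v *\<^sub>R w2)))"
    by (simp add: s_def v)
qed simp

lemma strictly_concave_on_minus_mul_exp_inverse:
  assumes "c \<noteq> 0" shows "strictly_concave_on {0<..} (\<lambda>w. - (w * exp (c / w)))"
  unfolding strictly_concave_on_def
proof (intro conjI ballI allI impI)
  fix w1 w2 t :: real
  assume w: "w1 \<in> {0<..}" "w2 \<in> {0<..}" and t: "w1 \<noteq> w2 \<and> 0 < t \<and> t < 1"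
  then have w: "0 < w1" "0 < w2" and t': "0 \<le> t" "t \<le> 1" by auto
  let ?E = "\<lambda>r. - exp (c * r)"
  define s \<mu> where "s = t * w1 + (1 - t) * w2" and "\<mu> = t * w1 / s"
  note persp = perspective_combination[OF w t', folded s_def, folded \<mu>_def]
  have "t * - (w1 * exp (c / w1)) + (1 - t) * - (w2 * exp (c / w2))
      = s * (\<mu> * ?E (1 / w1) + (1 - \<mu>) * ?E (1 / w2))"
    using persp(6)[of ?E 1 1] by simp
  also have "\<dots> < s * ?E (\<mu> * (1 / w1) + (1 - \<mu>) * (1 / w2))"
    using strictly_concave_onD[OF strictly_concave_on_minus_exp_scaled[OF assms], of "1 / w1" "1 / w2" \<mu>]
      persp(1) persp(4) t by (intro mult_strict_left_mono) auto
  also have "\<dots> = - (s * exp (c / s))"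
    using persp(5)[of 1 1, symmetric] by simp
  finally show "t * - (w1 * exp (c / w1)) + (1 - t) * - (w2 * exp (c / w2))
      < - ((t *\<^sub>R w1 + (1 - t) *\<^sub>R w2) * exp (c / (t *\<^sub>R w1 + (1 - t) *\<^sub>R w2)))"
    by (simp add: s_def)
qed simp

lemma quasiconcave_on_divide:
  assumes N: "concave_on S N" and D: "convex_on S D"
    and N_nonneg: "\<And>x. x \<in> S \<Longrightarrow> 0 \<le> N x" and D_pos: "\<And>x. x \<in> S \<Longrightarrow> 0 < D x"
  shows "quasiconcave_on S (\<lambda>x. N x / D x)"
  unfolding quasiconcave_on_def
proof (intro conjI ballI allI impI)
  show "convex S" using N by (rule concave_on_imp_convex)
  fix x y and t :: real
  assume xy: "x \<in> S" "y \<in> S" and t: "0 \<le> t \<and> t \<le> 1"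
  define z where "z = t *\<^sub>R x + (1 - t) *\<^sub>R y"
  define \<alpha> where "\<alpha> = min (N x / D x) (N y / D y)"
  have z: "z \<in> S" using convexD[OF \<open>convex S\<close> xy, of t "1 - t"] t by (simp add: z_def)
  have "0 \<le> \<alpha>" using N_nonneg[OF xy(1)] N_nonneg[OF xy(2)] D_pos[OF xy(1)] D_pos[OF xy(2)]
    by (simp add: \<alpha>_def)
  have "\<alpha> \<le> N x / D x" "\<alpha> \<le> N y / D y" by (simp_all add: \<alpha>_def)
  then have "\<alpha> * D x \<le> N x" "\<alpha> * D y \<le> N y" using D_pos xy by (simp_all add: pos_le_divide_eq)
  have "\<alpha> * D z \<le> \<alpha> * (t * D x + (1 - t) * D y)"
    using convex_onD[OF D, of "1 - t" x y] xy t \<open>0 \<le> \<alpha>\<close> by (intro mult_left_mono) (simp_all add: z_def)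
  also have "\<dots> = t * (\<alpha> * D x) + (1 - t) * (\<alpha> * D y)" by (simp add: algebra_simps)
  also have "\<dots> \<le> t * N x + (1 - t) * N y"
    using \<open>\<alpha> * D x \<le> N x\<close> \<open>\<alpha> * D y \<le> N y\<close> t by (intro add_mono mult_left_mono) auto
  also have "\<dots> \<le> N z" using concave_onD[OF N, of "1 - t" x y] xy t by (simp add: z_def)
  finally show "min (N x / D x) (N y / D y) \<le> N z / D z"
    using D_pos[OF z] by (simp add: \<alpha>_def pos_le_divide_eq)
qed

lemma strictly_quasiconcave_on_divide:
  assumes N: "concave_on S N" and D: "convex_on S D"
    and N_pos: "\<And>x. x \<in> S \<Longrightarrow> 0 < N x" and D_pos: "\<And>x. x \<in> S \<Longrightarrow> 0 < D x"
    and strict: "\<And>x y t. x \<in> S \<Longrightarrow> y \<in> S \<Longrightarrow> x \<noteq> y \<Longrightarrow> 0 < t \<Longrightarrow> t < 1 \<Longrightarrow>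
      t * N x + (1 - t) * N y < N (t *\<^sub>R x + (1 - t) *\<^sub>R y) \<or>
      D (t *\<^sub>R x + (1 - t) *\<^sub>R y) < t * D x + (1 - t) * D y"
  shows "strictly_quasiconcave_on S (\<lambda>x. N x / D x)"
  unfolding strictly_quasiconcave_on_def
proof (intro conjI ballI allI impI)
  show "convex S" using N by (rule concave_on_imp_convex)
  fix x y and t :: real
  assume xy: "x \<in> S" "y \<in> S" and t: "x \<noteq> y \<and> 0 < t \<and> t < 1"
  define z where "z = t *\<^sub>R x + (1 - t) *\<^sub>R y"
  define \<alpha> where "\<alpha> = min (N x / D x) (N y / D y)"
  have z: "z \<in> S" using convexD[OF \<open>convex S\<close> xy, of t "1 - t"] t by (simp add: z_def)
  have "0 < \<alpha>" using N_pos D_pos xy by (simp add: \<alpha>_def)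
  have "\<alpha> \<le> N x / D x" "\<alpha> \<le> N y / D y" by (simp_all add: \<alpha>_def)
  then have "\<alpha> * D x \<le> N x" "\<alpha> * D y \<le> N y" using D_pos xy by (simp_all add: pos_le_divide_eq)
  then have weighted: "\<alpha> * (t * D x + (1 - t) * D y) \<le> t * N x + (1 - t) * N y"
    using t by (simp add: distrib_left mult.left_commute add_mono mult_left_mono)
  have D_le: "D z \<le> t * D x + (1 - t) * D y" and N_ge: "t * N x + (1 - t) * N y \<le> N z"
    using convex_onD[OF D, of "1 - t" x y] concave_onD[OF N, of "1 - t" x y] xy t by (simp_all add: z_def)
  have "t * N x + (1 - t) * N y < N z \<or> D z < t * D x + (1 - t) * D y"
    using strict[OF xy, of t] t by (simp add: z_def)
  then have "\<alpha> * D z < N z"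
  proof
    assume "t * N x + (1 - t) * N y < N z"
    moreover have "\<alpha> * D z \<le> \<alpha> * (t * D x + (1 - t) * D y)"
      using D_le \<open>0 < \<alpha>\<close> by (intro mult_left_mono) auto
    ultimately show ?thesis using weighted by linarith
  next
    assume "D z < t * D x + (1 - t) * D y"
    then have "\<alpha> * D z < \<alpha> * (t * D x + (1 - t) * D y)" using \<open>0 < \<alpha>\<close> by simp
    then show ?thesis using weighted N_ge by linarith
  qed
  then show "min (N x / D x) (N y / D y) < N z / D z"
    using D_pos[OF z] by (simp add: \<alpha>_def pos_less_divide_eq)
qed

lemma maximization_reduction:
  fixes f :: "'a \<Rightarrow> real" and g :: "'b \<Rightarrow> real"
  assumes proj: "\<And>x. x \<in> A \<Longrightarrow> \<pi> x \<in> B \<and> f x \<le> g (\<pi> x)"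
    and lift: "\<And>y. y \<in> B \<Longrightarrow> \<sigma> y \<in> A \<and> f (\<sigma> y) = g y"
    and "B \<noteq> {}" and bdd: "bdd_above (g ` B)"
  shows "(SUP x\<in>A. f x) = (SUP y\<in>B. g y)"
    and "x \<in> A \<Longrightarrow> \<forall>x'\<in>A. f x' \<le> f x \<Longrightarrow> (\<forall>y\<in>B. g y \<le> g (\<pi> x)) \<and> g (\<pi> x) = f x"
    and "y \<in> B \<Longrightarrow> \<forall>y'\<in>B. g y' \<le> g y \<Longrightarrow> \<forall>x\<in>A. f x \<le> f (\<sigma> y)"
proof -
  have "A \<noteq> {}" using lift \<open>B \<noteq> {}\<close> by blast
  have bdd_A: "bdd_above (f ` A)"
    using bdd proj by (auto simp: bdd_above_def intro: order_trans)
  show "(SUP x\<in>A. f x) = (SUP y\<in>B. g y)"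
  proof (rule antisym)
    show "(SUP x\<in>A. f x) \<le> (SUP y\<in>B. g y)"
      using proj by (intro cSUP_mono[OF \<open>A \<noteq> {}\<close> bdd]) blast
    show "(SUP y\<in>B. g y) \<le> (SUP x\<in>A. f x)"
      using lift by (intro cSUP_mono[OF \<open>B \<noteq> {}\<close> bdd_A]) force
  qed
  show "(\<forall>y\<in>B. g y \<le> g (\<pi> x)) \<and> g (\<pi> x) = f x" if "x \<in> A" "\<forall>x'\<in>A. f x' \<le> f x"
  proof -
    have below: "g y \<le> f x" if "y \<in> B" for y using lift[OF that] \<open>\<forall>x'\<in>A. f x' \<le> f x\<close> by metis
    then have "g (\<pi> x) = f x" using proj[OF \<open>x \<in> A\<close>] by (simp add: antisym)
    then show ?thesis using below by simp
  qed
  show "\<forall>x\<in>A. f x \<le> f (\<sigma> y)" if "y \<in> B" "\<forall>y'\<in>B. g y' \<le> g y"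
    using proj lift that by (metis order_trans)
qed

lemma qmin_eq_exp: "0 < w \<Longrightarrow> qmin N0 h R w = N0 / h * (w * exp (R * ln 2 / w) - w)"
  by (simp add: qmin_def powr_def field_simps)

lemma qmin_pos:
  assumes "0 < N0" "0 < h" "0 < R" "0 < w" shows "0 < qmin N0 h R w"
proof -
  have "1 < 2 powr (R / w)" using assms by (intro gr_one_powr) auto
  then show ?thesis using assms by (simp add: qmin_def)
qed

lemma rate_constraint_qmin:
  assumes "0 < N0" "0 < h" "0 < w" shows "w * log 2 (1 + qmin N0 h R w * h / (w * N0)) = R"
proof -
  have "qmin N0 h R w * h / (w * N0) = 2 powr (R / w) - 1" using assms by (simp add: qmin_def field_simps)
  then show ?thesis using assms by simp
qed

lemma qmin_le:
  assumes "0 < N0" "0 < h" "0 < w" "0 \<le> q" and rate: "R \<le> w * log 2 (1 + q * h / (w * N0))"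
  shows "qmin N0 h R w \<le> q"
proof -
  have "2 powr (R / w) \<le> 2 powr (log 2 (1 + q * h / (w * N0)))"
    using rate assms by (intro powr_mono) (simp_all add: pos_divide_le_eq mult.commute)
  also have "\<dots> = 1 + q * h / (w * N0)"
    using assms by (intro powr_log_cancel) (simp_all add: add_pos_nonneg)
  finally show ?thesis using assms by (simp add: qmin_def field_simps)
qed

lemma qmin_convex_combination:
  assumes "0 \<le> N0 / h" "0 < w1" "0 < w2" "0 \<le> t" "t \<le> 1"
  shows "qmin N0 h R (t * w1 + (1 - t) * w2) \<le> t * qmin N0 h R w1 + (1 - t) * qmin N0 h R w2"
proof -
  let ?\<phi> = "\<lambda>w. w * exp (R * ln 2 / w)"
  have w: "0 < t * w1 + (1 - t) * w2" using assms(2-5) by (cases "t = 0") (simp_all add: add_pos_nonneg)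
  have "qmin N0 h R (t * w1 + (1 - t) * w2)
      = N0 / h * (?\<phi> (t * w1 + (1 - t) * w2) - (t * w1 + (1 - t) * w2))"
    by (rule qmin_eq_exp[OF w])
  also have "\<dots> \<le> N0 / h * (t * ?\<phi> w1 + (1 - t) * ?\<phi> w2 - (t * w1 + (1 - t) * w2))"
    using concave_onD[OF concave_on_minus_mul_exp_inverse[of "R * ln 2"], of "1 - t" w1 w2] assms
    by (intro mult_left_mono) auto
  also have "\<dots> = t * qmin N0 h R w1 + (1 - t) * qmin N0 h R w2"
    using assms by (simp add: qmin_eq_exp algebra_simps add_divide_distrib diff_divide_distrib)
  finally show ?thesis .
qed

lemma qmin_strictly_convex_combination:
  assumes "0 < N0 / h" "R \<noteq> 0" "0 < w1" "0 < w2" "w1 \<noteq> w2" "0 < t" "t < 1"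
  shows "qmin N0 h R (t * w1 + (1 - t) * w2) < t * qmin N0 h R w1 + (1 - t) * qmin N0 h R w2"
proof -
  let ?\<phi> = "\<lambda>w. w * exp (R * ln 2 / w)"
  have w: "0 < t * w1 + (1 - t) * w2" using assms(3-7) by (simp add: add_pos_nonneg)
  have "R * ln 2 \<noteq> 0" using assms(2) by simp
  have "qmin N0 h R (t * w1 + (1 - t) * w2)
      = N0 / h * (?\<phi> (t * w1 + (1 - t) * w2) - (t * w1 + (1 - t) * w2))"
    by (rule qmin_eq_exp[OF w])
  also have "\<dots> < N0 / h * (t * ?\<phi> w1 + (1 - t) * ?\<phi> w2 - (t * w1 + (1 - t) * w2))"
    using strictly_concave_onD[OF strictly_concave_on_minus_mul_exp_inverse[OF \<open>R * ln 2 \<noteq> 0\<close>], of w1 w2 t]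
      assms by (intro mult_strict_left_mono) auto
  also have "\<dots> = t * qmin N0 h R w1 + (1 - t) * qmin N0 h R w2"
    using assms by (simp add: qmin_eq_exp algebra_simps add_divide_distrib diff_divide_distrib)
  finally show ?thesis .
qed

definition su_rate :: "real \<Rightarrow> real \<Rightarrow> real \<Rightarrow> real \<times> real \<Rightarrow> real" where
  "su_rate N0 g W = (\<lambda>(p, w). rate (W - w) (p * g / N0))"

definition consumed_power :: "real \<Rightarrow> real \<Rightarrow> real \<Rightarrow> real \<Rightarrow> real \<times> real \<Rightarrow> real" where
  "consumed_power N0 \<xi> h R = (\<lambda>(p, w). (p + qmin N0 h R w) / \<xi>)"

lemma EE2_eq_divide: "EE2 N0 \<xi> h g W R = (\<lambda>z. su_rate N0 g W z / consumed_power N0 \<xi> h R z)"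
  by (auto simp: EE2_def su_rate_def consumed_power_def qmin_def add_divide_distrib)

lemma convex_F2: "convex (F2 W)"
proof -
  have "F2 W = {0..} \<times> {0<..W}" by (auto simp: F2_def)
  then show ?thesis by (simp add: convex_Times)
qed

lemma concave_on_su_rate:
  assumes "0 \<le> g / N0" shows "concave_on (F2 W) (su_rate N0 g W)"
  unfolding concave_on_iff
proof (intro conjI ballI allI impI)
  show "convex (F2 W)" by (rule convex_F2)
  fix z1 z2 :: "real \<times> real" and u v :: real
  assume "z1 \<in> F2 W" "z2 \<in> F2 W" and uv: "0 \<le> u" "0 \<le> v" "u + v = 1"
  then obtain p1 w1 p2 w2 where z: "z1 = (p1, w1)" "z2 = (p2, w2)"
    and pw: "0 \<le> p1" "w1 \<le> W" "0 \<le> p2" "w2 \<le> W" by (auto simp: F2_def)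
  have v: "v = 1 - u" using uv by simp
  have "W - (u * w1 + v * w2) = u * (W - w1) + v * (W - w2)"
    and "(u * p1 + v * p2) * g / N0 = u * (p1 * g / N0) + v * (p2 * g / N0)"
    using uv by (simp_all add: v algebra_simps add_divide_distrib diff_divide_distrib)
  moreover have "0 \<le> p1 * g / N0" "0 \<le> p2 * g / N0"
    using assms pw by (metis mult_nonneg_nonneg times_divide_eq_right)+
  ultimately show "u * su_rate N0 g W z1 + v * su_rate N0 g W z2 \<le> su_rate N0 g W (u *\<^sub>R z1 + v *\<^sub>R z2)"
    using concave_onD[OF concave_on_rate, of "1 - u" "(W - w1, p1 * g / N0)" "(W - w2, p2 * g / N0)"] uv pw
    by (simp add: su_rate_def z v)
qed

lemma convex_on_consumed_power:
  assumes "0 < \<xi>" "0 \<le> N0 / h" shows "convex_on (F2 W) (consumed_power N0 \<xi> h R)"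
  unfolding convex_on_def
proof (intro conjI ballI allI impI)
  show "convex (F2 W)" by (rule convex_F2)
  fix z1 z2 :: "real \<times> real" and u v :: real
  assume "z1 \<in> F2 W" "z2 \<in> F2 W" and uv: "0 \<le> u" "0 \<le> v" "u + v = 1"
  then obtain p1 w1 p2 w2 where z: "z1 = (p1, w1)" "z2 = (p2, w2)" and w: "0 < w1" "0 < w2"
    by (auto simp: F2_def)
  have v: "v = 1 - u" using uv by simp
  have "(u * p1 + v * p2) + qmin N0 h R (u * w1 + v * w2)
      \<le> u * (p1 + qmin N0 h R w1) + v * (p2 + qmin N0 h R w2)"
    using qmin_convex_combination[OF assms(2) w, of u] uv by (simp add: v algebra_simps)
  then have "((u * p1 + v * p2) + qmin N0 h R (u * w1 + v * w2)) / \<xi>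
      \<le> (u * (p1 + qmin N0 h R w1) + v * (p2 + qmin N0 h R w2)) / \<xi>"
    using assms(1) by (simp add: divide_right_mono)
  then show "consumed_power N0 \<xi> h R (u *\<^sub>R z1 + v *\<^sub>R z2)
      \<le> u * consumed_power N0 \<xi> h R z1 + v * consumed_power N0 \<xi> h R z2"
    by (simp add: consumed_power_def z distrib_left times_divide_eq_right flip: add_divide_distrib)
qed

lemma consumed_power_pos:
  assumes "0 < N0" "0 < h" "0 < \<xi>" "0 < R" "0 \<le> p" "0 < w"
  shows "0 < consumed_power N0 \<xi> h R (p, w)"
  using qmin_pos[of N0 h R w] assms by (simp add: consumed_power_def)

lemma su_rate_or_consumed_power_strict:
  assumes "0 < N0" "0 < g" "0 < h" "0 < \<xi>" "0 < R"
    and xy: "x \<in> {(p, w). 0 < p \<and> 0 < w \<and> w < W}" "y \<in> {(p, w). 0 < p \<and> 0 < w \<and> w < W}" "x \<noteq> y"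
    and t: "0 < t" "t < 1"
  shows "t * su_rate N0 g W x + (1 - t) * su_rate N0 g W y < su_rate N0 g W (t *\<^sub>R x + (1 - t) *\<^sub>R y)
    \<or> consumed_power N0 \<xi> h R (t *\<^sub>R x + (1 - t) *\<^sub>R y)
        < t * consumed_power N0 \<xi> h R x + (1 - t) * consumed_power N0 \<xi> h R y"
proof -
  obtain p1 w1 p2 w2 where z: "x = (p1, w1)" "y = (p2, w2)"
    and pw: "0 < p1" "0 < w1" "w1 < W" "0 < p2" "0 < w2" "w2 < W" using xy by auto
  show ?thesis
  proof (cases "w1 = w2")
    case True
    then have ne: "p1 * g / N0 \<noteq> p2 * g / N0" using xy z assms by auto
    from strictly_concave_onD[OF strictly_concave_on_rate, of "W - w1" "p1 * g / N0" "p2 * g / N0" t]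
    have "t * rate (W - w1) (p1 * g / N0) + (1 - t) * rate (W - w1) (p2 * g / N0)
        < rate (W - w1) (t * (p1 * g / N0) + (1 - t) * (p2 * g / N0))"
      using ne pw t assms by simp
    then have "t * su_rate N0 g W x + (1 - t) * su_rate N0 g W y < su_rate N0 g W (t *\<^sub>R x + (1 - t) *\<^sub>R y)"
      using True by (simp add: su_rate_def z algebra_simps add_divide_distrib diff_divide_distrib)
    then show ?thesis ..
  next
    case False
    have "qmin N0 h R (t * w1 + (1 - t) * w2) < t * qmin N0 h R w1 + (1 - t) * qmin N0 h R w2"
      using qmin_strictly_convex_combination[of N0 h R w1 w2 t] False pw t assms by simp
    then have "((t * p1 + (1 - t) * p2) + qmin N0 h R (t * w1 + (1 - t) * w2)) / \<xi>
        < (t * (p1 + qmin N0 h R w1) + (1 - t) * (p2 + qmin N0 h R w2)) / \<xi>"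
      using assms(4) by (intro divide_strict_right_mono) (simp_all add: algebra_simps)
    then have "consumed_power N0 \<xi> h R (t *\<^sub>R x + (1 - t) *\<^sub>R y)
        < t * consumed_power N0 \<xi> h R x + (1 - t) * consumed_power N0 \<xi> h R y"
      by (simp add: consumed_power_def z distrib_left times_divide_eq_right flip: add_divide_distrib)
    then show ?thesis ..
  qed
qed

lemma EE2_le:
  assumes "0 < N0" "0 \<le> g" "0 < h" "0 < \<xi>" "0 < R" and pw: "(p, w) \<in> F2 W"
  shows "EE2 N0 \<xi> h g W R (p, w) \<le> g * \<xi> / (N0 * ln 2)"
proof -
  have "0 \<le> p" "0 < w" "w \<le> W" using pw by (auto simp: F2_def)
  have "su_rate N0 g W (p, w) \<le> p * g / N0 / ln 2"
    using rate_le[of "W - w" "p * g / N0"] \<open>0 \<le> p\<close> \<open>w \<le> W\<close> assms by (simp add: su_rate_def)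
  also have "\<dots> = g * \<xi> / (N0 * ln 2) * (p / \<xi>)" using assms by (simp add: field_simps)
  also have "\<dots> \<le> g * \<xi> / (N0 * ln 2) * consumed_power N0 \<xi> h R (p, w)"
    using qmin_pos[of N0 h R w] \<open>0 < w\<close> assms
    by (intro mult_left_mono) (simp_all add: consumed_power_def divide_right_mono)
  finally show ?thesis
    using consumed_power_pos[OF assms(1,3-5) \<open>0 \<le> p\<close> \<open>0 < w\<close>]
    by (simp add: EE2_eq_divide pos_divide_le_eq)
qed

lemma EE1_le_EE2:
  assumes "0 < N0" "0 \<le> g" "0 < h" "0 < \<xi>" "0 < R" and x: "(p, b, q, w) \<in> F1 N0 \<xi> h g W R"
  shows "(p, w) \<in> F2 W \<and> EE1 N0 \<xi> h g W R (p, b, q, w) \<le> EE2 N0 \<xi> h g W R (p, w)"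
proof
  have F1: "0 \<le> p" "0 \<le> b" "0 \<le> q" "0 < w" "w \<le> W" "b + w \<le> W"
    "R \<le> w * log 2 (1 + q * h / (w * N0))" using x by (auto simp: F1_def)
  then show "(p, w) \<in> F2 W" by (simp add: F2_def)
  have "0 \<le> p * g / N0" using F1 assms by simp
  then have "rate b (p * g / N0) \<le> su_rate N0 g W (p, w)"
    using rate_mono_bandwidth[of b "W - w"] F1 by (simp add: su_rate_def)
  moreover have "consumed_power N0 \<xi> h R (p, w) \<le> p / \<xi> + q / \<xi>"
    using qmin_le[OF assms(1,3) F1(4,3,7)] assms
    by (simp add: consumed_power_def divide_right_mono flip: add_divide_distrib)
  moreover have "0 \<le> su_rate N0 g W (p, w)"
    using rate_nonneg F1 \<open>0 \<le> p * g / N0\<close> by (simp add: su_rate_def)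
  ultimately have "rate b (p * g / N0) / (p / \<xi> + q / \<xi>)
      \<le> su_rate N0 g W (p, w) / consumed_power N0 \<xi> h R (p, w)"
    using consumed_power_pos[OF assms(1,3-5) F1(1,4)] by (intro frac_le)
  then show "EE1 N0 \<xi> h g W R (p, b, q, w) \<le> EE2 N0 \<xi> h g W R (p, w)"
    by (simp add: EE1_def EE2_eq_divide)
qed

lemma EE1_at_qmin:
  assumes "0 < N0" "0 < h" "0 < R" and pw: "(p, w) \<in> F2 W"
  shows "(p, W - w, qmin N0 h R w, w) \<in> F1 N0 \<xi> h g W R
    \<and> EE1 N0 \<xi> h g W R (p, W - w, qmin N0 h R w, w) = EE2 N0 \<xi> h g W R (p, w)"
proof -
  have "0 \<le> p" "0 < w" "w \<le> W" using pw by (auto simp: F2_def)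
  then show ?thesis
    using qmin_pos[OF assms(1-3)] rate_constraint_qmin[OF assms(1,2)]
    by (simp add: F1_def EE1_def EE2_eq_divide su_rate_def consumed_power_def add_divide_distrib less_imp_le)
qed

lemma quasiconcave_on_EE2:
  assumes "0 < N0" "0 \<le> g" "0 < h" "0 < \<xi>" "0 < R"
  shows "quasiconcave_on (F2 W) (EE2 N0 \<xi> h g W R)"
  unfolding EE2_eq_divide using assms
  by (intro quasiconcave_on_divide concave_on_su_rate convex_on_consumed_power)
    (auto simp: F2_def su_rate_def rate_nonneg consumed_power_pos)

lemma strictly_quasiconcave_on_EE2:
  assumes pos: "0 < N0" "0 < g" "0 < h" "0 < \<xi>" "0 < R"
  shows "strictly_quasiconcave_on {(p, w). 0 < p \<and> 0 < w \<and> w < W} (EE2 N0 \<xi> h g W R)"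
  unfolding EE2_eq_divide
proof (rule strictly_quasiconcave_on_divide)
  let ?S = "{(p, w). 0 < p \<and> 0 < w \<and> w < W} :: (real \<times> real) set"
  have S: "?S = {0<..} \<times> {0<..<W}" by auto
  have "convex ?S" unfolding S by (intro convex_Times) auto
  have sub: "?S \<subseteq> F2 W" by (auto simp: F2_def)
  have "concave_on (F2 W) (su_rate N0 g W)" "convex_on (F2 W) (consumed_power N0 \<xi> h R)"
    using concave_on_su_rate convex_on_consumed_power pos by simp_all
  then show "concave_on ?S (su_rate N0 g W)" "convex_on ?S (consumed_power N0 \<xi> h R)"
    using \<open>convex ?S\<close> sub by (metis concave_on_def convex_on_subset)+
  show "\<And>x. x \<in> ?S \<Longrightarrow> 0 < su_rate N0 g W x" using pos by (auto simp: su_rate_def rate_pos)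
  show "\<And>x. x \<in> ?S \<Longrightarrow> 0 < consumed_power N0 \<xi> h R x" using consumed_power_pos[OF pos(1,3-5)] by auto
qed (use su_rate_or_consumed_power_strict[OF pos] in blast)

theorem theorem3:
  fixes N0 \<xi> h g W R :: real
  assumes "N0 > 0" and "0 < \<xi>" and "\<xi> \<le> 1" and "W > 0" and "R > 0" and "h > 0" and "g > 0"
  shows "(SUP x\<in>F1 N0 \<xi> h g W R. EE1 N0 \<xi> h g W R x) = (SUP y\<in>F2 W. EE2 N0 \<xi> h g W R y)
    \<and> (\<forall>p b q w. (p, b, q, w) \<in> F1 N0 \<xi> h g W R \<and>
          (\<forall>x\<in>F1 N0 \<xi> h g W R. EE1 N0 \<xi> h g W R x \<le> EE1 N0 \<xi> h g W R (p, b, q, w)) \<longrightarrow>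
          (p, w) \<in> F2 W \<and> (\<forall>y\<in>F2 W. EE2 N0 \<xi> h g W R y \<le> EE2 N0 \<xi> h g W R (p, w)) \<and>
          EE2 N0 \<xi> h g W R (p, w) = EE1 N0 \<xi> h g W R (p, b, q, w))
    \<and> (\<forall>p w. (p, w) \<in> F2 W \<and> (\<forall>y\<in>F2 W. EE2 N0 \<xi> h g W R y \<le> EE2 N0 \<xi> h g W R (p, w)) \<longrightarrow>
          (p, W - w, qmin N0 h R w, w) \<in> F1 N0 \<xi> h g W R \<and>
          (\<forall>x\<in>F1 N0 \<xi> h g W R. EE1 N0 \<xi> h g W R x \<le> EE1 N0 \<xi> h g W R (p, W - w, qmin N0 h R w, w)) \<and>
          EE1 N0 \<xi> h g W R (p, W - w, qmin N0 h R w, w) = EE2 N0 \<xi> h g W R (p, w))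
    \<and> quasiconcave_on (F2 W) (EE2 N0 \<xi> h g W R)
    \<and> strictly_quasiconcave_on {(p, w). 0 < p \<and> 0 < w \<and> w < W} (EE2 N0 \<xi> h g W R)"
proof -
  let ?F1 = "F1 N0 \<xi> h g W R" and ?EE1 = "EE1 N0 \<xi> h g W R" and ?EE2 = "EE2 N0 \<xi> h g W R"
  have pos: "0 < N0" "0 \<le> g" "0 < h" "0 < \<xi>" "0 < R" using assms by simp_all
  have proj: "(case x of (p, b, q, w) \<Rightarrow> (p, w)) \<in> F2 W
      \<and> ?EE1 x \<le> ?EE2 (case x of (p, b, q, w) \<Rightarrow> (p, w))" if "x \<in> ?F1" for x
    using EE1_le_EE2[OF pos] that by (cases x) simp
  have lift: "(case y of (p, w) \<Rightarrow> (p, W - w, qmin N0 h R w, w)) \<in> ?F1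
      \<and> ?EE1 (case y of (p, w) \<Rightarrow> (p, W - w, qmin N0 h R w, w)) = ?EE2 y" if "y \<in> F2 W" for y
    using EE1_at_qmin[OF pos(1,3,5)] that by (cases y) simp
  have "F2 W \<noteq> {}" using assms by (auto simp: F2_def intro!: exI[of _ "(0, W)"])
  have "bdd_above (?EE2 ` F2 W)"
    using EE2_le[OF pos] by (intro bdd_aboveI2[where M = "g * \<xi> / (N0 * ln 2)"]) auto
  note reduction = maximization_reduction[OF proj lift \<open>F2 W \<noteq> {}\<close> this]
  have T1_to_T2: "(p, w) \<in> F2 W \<and> (\<forall>y\<in>F2 W. ?EE2 y \<le> ?EE2 (p, w)) \<and> ?EE2 (p, w) = ?EE1 (p, b, q, w)"
    if "(p, b, q, w) \<in> ?F1 \<and> (\<forall>x\<in>?F1. ?EE1 x \<le> ?EE1 (p, b, q, w))" for p b q w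
    using that proj[of "(p, b, q, w)"] reduction(2)[of "(p, b, q, w)"] by auto
  have T2_to_T1: "(p, W - w, qmin N0 h R w, w) \<in> ?F1
      \<and> (\<forall>x\<in>?F1. ?EE1 x \<le> ?EE1 (p, W - w, qmin N0 h R w, w))
      \<and> ?EE1 (p, W - w, qmin N0 h R w, w) = ?EE2 (p, w)"
    if "(p, w) \<in> F2 W \<and> (\<forall>y\<in>F2 W. ?EE2 y \<le> ?EE2 (p, w))" for p w
    using that lift[of "(p, w)"] reduction(3)[of "(p, w)"] by simp
  show ?thesis
    using reduction(1) T1_to_T2 T2_to_T1 quasiconcave_on_EE2[OF pos]
      strictly_quasiconcave_on_EE2[OF pos(1) assms(7) pos(3-5)] by blast
qed

end
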